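(* Let $p$ be an odd prime, $n$ a positive integer, $d=\frac{p^n+1}{2}$ and $F(x)=x^d$ on $\mathrm{GF}(p^n)$. For every $c\in\mathrm{GF}(p^n)$ with $c\neq\pm1$, ${}_c\Delta_F\le 4$. Moreover, if $p^n\equiv1\pmod 4$ and $c\neq\pm1$ satisfies $\chi\big(\frac{1-c}{1+c}\big)=1$, then ${}_c\Delta_F\le 2$.
   Context: For a function $F:\mathrm{GF}(p^n)\to\mathrm{GF}(p^n)$ and $a,b,c\in\mathrm{GF}(p^n)$, let ${}_c\Delta_F(a,b)=\#\{x\in\mathrm{GF}(p^n): F(x+a)-cF(x)=b\}$. The $c$-differential uniformity of $F$ is ${}_c\Delta_F=\max\{{}_c\Delta_F(a,b): a,b\in\mathrm{GF}(p^n),\ \text{and } a\neq 0 \text{ if } c=1\}$. $\chi$ denotes the quadratic multiplicative character of $\mathrm{GF}(p^n)^*$ ($\chi(y)=1$ if $y$ is a nonzero square, $-1$ otherwise). *)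

theory Defs
  imports Main "HOL-Computational_Algebra.Primes"
begin

definition cdiff_count :: "('a::{field,finite} \<Rightarrow> 'a) \<Rightarrow> 'a \<Rightarrow> 'a \<Rightarrow> 'a \<Rightarrow> nat" where
  "cdiff_count F c a b = card {x. F (x + a) - c * F x = b}"

definition cdiff_uniformity :: "('a::{field,finite} \<Rightarrow> 'a) \<Rightarrow> 'a \<Rightarrow> nat" where
  "cdiff_uniformity F c =
     Max {cdiff_count F c a b | a b. c \<noteq> 1 \<or> a \<noteq> 0}"

text \<open>Quadratic character on the nonzero elements (value -1 at 0 is irrelevant here).\<close>
definition qchi :: "'a::field \<Rightarrow> int" where
  "qchi y = (if y \<noteq> 0 \<and> (\<exists>z. y = z ^ 2) then 1 else -1)"

end

theory Submission
  imports Defs "HOL-Library.Cardinality"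
begin

text \<open>Let q = p^n and h = (q - 1)/2. For x \<noteq> 0 Euler's criterion gives x^h = \<chi>(x), so
F(x) = x^(h+1) = \<chi>(x) x is the identity twisted by a sign. On each of the four sign patterns
(\<chi>(x+a), \<chi>(x)) = (e, f) the equation F(x+a) - c F(x) = b is the linear equation
(e - c f) x = b - e a, whose coefficient is nonzero because c \<noteq> \<plusminus>1; hence at most four solutions.
Two solutions with the same \<chi>(x+a) = e but different \<chi>(x) differ by the factor (e + c)/(e - c),
which is (1 + c)/(1 - c) or its inverse. If (1 - c)/(1 + c) is a square, multiplicativity of \<chi>
forbids this, so each value of \<chi>(x+a) carries at most one solution.\<close>

lemma power_card_minus_one_eq_1:
  fixes x :: "'a::{field,finite}"
  assumes "x \<noteq> 0"
  shows "x ^ (CARD('a) - 1) = 1"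
proof -
  let ?U = "UNIV - {0::'a}"
  have inj: "inj_on ((*) x) ?U" using assms by (auto simp: inj_on_def)
  have img: "(*) x ` ?U = ?U"
  proof
    show "(*) x ` ?U \<subseteq> ?U" using assms by auto
    show "?U \<subseteq> (*) x ` ?U"
    proof
      fix y assume "y \<in> ?U"
      then have "y = x * (y / x)" "y / x \<in> ?U" using assms by auto
      then show "y \<in> (*) x ` ?U" by blast
    qed
  qed
  have "prod id ?U = prod id ((*) x ` ?U)" using img by simp
  also have "\<dots> = prod ((*) x) ?U" using prod.reindex[OF inj] by simp
  also have "\<dots> = x ^ card ?U * prod id ?U" by (simp add: prod.distrib)
  finally have "x ^ card ?U = 1"
    by (metis mult_1 mult_right_cancel prod_zero_iff DiffE finite id_apply insertI1)
  then show ?thesis by (simp add: card_Diff_singleton)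
qed

text \<open>By Euler's criterion this is \<chi> on nonzero elements; its value at 0 is 1.\<close>

definition euler_sign :: "'a::{field,finite} \<Rightarrow> 'a" where
  "euler_sign x = (if x ^ ((CARD('a) - 1) div 2) = -1 then -1 else 1)"

lemma euler_sign_cases: "euler_sign x = 1 \<or> euler_sign x = -1"
  by (simp add: euler_sign_def)

lemma power_half_card_eq_euler_sign:
  fixes x :: "'a::{field,finite}"
  assumes "odd CARD('a)" and "x \<noteq> 0"
  shows "x ^ ((CARD('a) - 1) div 2) = euler_sign x"
proof -
  have "(x ^ ((CARD('a) - 1) div 2)) ^ 2 = 1"
    using assms power_card_minus_one_eq_1[OF assms(2)]
    by (simp add: power_mult[symmetric] mult.commute)
  then show ?thesis by (auto simp: euler_sign_def power2_eq_1_iff)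
qed

lemma power_half_card_Suc:
  fixes x :: "'a::{field,finite}"
  assumes "odd CARD('a)"
  shows "x ^ ((CARD('a) + 1) div 2) = euler_sign x * x"
proof (cases "x = 0")
  case False
  have "(CARD('a) + 1) div 2 = Suc ((CARD('a) - 1) div 2)"
    using assms by (elim oddE) simp
  then show ?thesis
    using power_half_card_eq_euler_sign[OF assms False] by (simp add: mult.commute)
qed simp

lemma euler_sign_mult:
  fixes x y :: "'a::{field,finite}"
  assumes "odd CARD('a)" and "x \<noteq> 0" and "y \<noteq> 0"
  shows "euler_sign (x * y) = euler_sign x * euler_sign y"
  using power_half_card_eq_euler_sign[OF assms(1)] assms(2,3)
  by (metis power_mult_distrib no_zero_divisors)

lemma euler_sign_square:
  fixes z :: "'a::{field,finite}"
  assumes "odd CARD('a)" and "z \<noteq> 0"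
  shows "euler_sign (z ^ 2) = 1"
proof -
  have "euler_sign (z ^ 2) = z ^ (2 * ((CARD('a) - 1) div 2))"
    using power_half_card_eq_euler_sign[OF assms(1), of "z ^ 2"] assms(2)
    by (simp add: power_mult)
  also have "\<dots> = 1" using assms power_card_minus_one_eq_1[OF assms(2)] by simp
  finally show ?thesis .
qed

lemma sign_minus_mult_nonzero:
  fixes c e f :: "'a::field"
  assumes "e = 1 \<or> e = -1" and "f = 1 \<or> f = -1" and "c \<noteq> 1" and "c \<noteq> -1"
  shows "e - c * f \<noteq> 0"
proof
  assume "e - c * f = 0"
  then have "c * f = e" by simp
  then have "c = e * f" using assms(2) by auto
  then show False using assms by auto
qed

lemma sign_twisted_solution_eq:
  fixes s :: "'a::field \<Rightarrow> 'a"
  assumes sign: "\<And>y. s y = 1 \<or> s y = -1" and "c \<noteq> 1" and "c \<noteq> -1"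
    and sol: "s (x + a) * (x + a) - c * (s x * x) = b"
  shows "x = (b - s (x + a) * a) / (s (x + a) - c * s x)"
proof -
  have "(s (x + a) - c * s x) * x = b - s (x + a) * a"
    using sol by (simp add: algebra_simps)
  moreover have "s (x + a) - c * s x \<noteq> 0"
    using sign_minus_mult_nonzero[OF sign sign assms(2,3)] .
  ultimately show ?thesis by (simp add: field_simps)
qed

lemma sign_ratio_eq_1:
  fixes s :: "'a::field \<Rightarrow> 'a"
  assumes "s ((1 - c) / (1 + c)) = 1" and "s ((1 + c) / (1 - c)) = 1"
    and "e = 1 \<or> e = -1" and "f = 1 \<or> f = -1"
  shows "s ((e + c * f) / (e - c * f)) = 1"
proof -
  have "- 1 + c = - (1 - c)" "- 1 - c = - (1 + c)" by simp_all
  then have "(- 1 + c) / (- 1 - c) = (1 - c) / (1 + c)"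
    "(- 1 - c) / (- 1 + c) = (1 + c) / (1 - c)"
    by (simp_all only: minus_divide_divide)
  with assms show ?thesis by (elim disjE) simp_all
qed

lemma sign_twisted_solutions_unique:
  fixes s :: "'a::field \<Rightarrow> 'a"
  assumes sign: "\<And>y. s y = 1 \<or> s y = -1"
    and mult: "\<And>x y. x \<noteq> 0 \<Longrightarrow> y \<noteq> 0 \<Longrightarrow> s (x * y) = s x * s y"
    and c: "c \<noteq> 1" "c \<noteq> -1"
    and ratio: "s ((1 - c) / (1 + c)) = 1" "s ((1 + c) / (1 - c)) = 1"
    and u: "s (u + a) * (u + a) - c * (s u * u) = b"
    and v: "s (v + a) * (v + a) - c * (s v * v) = b"
    and same_shift: "s (u + a) = s (v + a)"
  shows "u = v"
proof (cases "s u = s v")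
  case True
  then show ?thesis
    using sign_twisted_solution_eq[OF sign c u] sign_twisted_solution_eq[OF sign c v] same_shift
    by simp
next
  case False
  define e where "e = s (u + a)"
  define r where "r = (e + c * s u) / (e - c * s u)"
  have e: "e = 1 \<or> e = -1" using sign e_def by simp
  have "s v = - s u" using sign[of u] sign[of v] False by auto
  then have "(e + c * s u) * v = b - e * a"
    using v same_shift unfolding e_def by (simp add: algebra_simps)
  moreover have "(e - c * s u) * u = b - e * a"
    using u unfolding e_def by (simp add: algebra_simps)
  moreover have "e - c * s u \<noteq> 0" "e + c * s u \<noteq> 0"
    using sign_minus_mult_nonzero[OF e _ c, of "s u"] sign_minus_mult_nonzero[OF e _ c, of "- s u"]
      sign[of u] by auto
  ultimately have uv: "u = v * r" and "r \<noteq> 0"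
    unfolding r_def
    by (metis (no_types, lifting) nonzero_mult_div_cancel_left times_divide_eq_right mult.commute,
        simp)
  have "s r = 1" unfolding r_def using sign_ratio_eq_1[OF ratio e sign] .
  show ?thesis
  proof (cases "v = 0")
    case False
    have "s u = s v" using uv mult[OF False \<open>r \<noteq> 0\<close>] \<open>s r = 1\<close> by simp
    with \<open>s u \<noteq> s v\<close> show ?thesis by contradiction
  qed (simp add: uv)
qed

lemma card_sign_twisted_solutions_le_4:
  fixes s :: "'a::{field,finite} \<Rightarrow> 'a"
  assumes sign: "\<And>y. s y = 1 \<or> s y = -1" and c: "c \<noteq> 1" "c \<noteq> -1"
  shows "card {x. s (x + a) * (x + a) - c * (s x * x) = b} \<le> 4"
proof -
  let ?sol = "\<lambda>(e, f). (b - e * a) / (e - c * f)"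
  let ?E = "{1, -1::'a} \<times> {1, -1::'a}"
  have "{x. s (x + a) * (x + a) - c * (s x * x) = b} \<subseteq> ?sol ` ?E"
  proof
    fix x assume "x \<in> {x. s (x + a) * (x + a) - c * (s x * x) = b}"
    then have "x = ?sol (s (x + a), s x)"
      unfolding prod.case by (intro sign_twisted_solution_eq[OF sign c]) simp
    moreover have "(s (x + a), s x) \<in> ?E" using sign by auto
    ultimately show "x \<in> ?sol ` ?E" by blast
  qed
  then have "card {x. s (x + a) * (x + a) - c * (s x * x) = b} \<le> card (?sol ` ?E)"
    by (simp add: card_mono)
  also have "\<dots> \<le> card ?E" by (rule card_image_le) simp
  also have "\<dots> \<le> 4" by (simp add: card_cartesian_product card_insert_if)
  finally show ?thesis .
qed

lemma card_sign_twisted_solutions_le_2: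
  fixes s :: "'a::{field,finite} \<Rightarrow> 'a"
  assumes sign: "\<And>y. s y = 1 \<or> s y = -1"
    and mult: "\<And>x y. x \<noteq> 0 \<Longrightarrow> y \<noteq> 0 \<Longrightarrow> s (x * y) = s x * s y"
    and c: "c \<noteq> 1" "c \<noteq> -1"
    and ratio: "s ((1 - c) / (1 + c)) = 1" "s ((1 + c) / (1 - c)) = 1"
  shows "card {x. s (x + a) * (x + a) - c * (s x * x) = b} \<le> 2"
proof -
  let ?S = "{x. s (x + a) * (x + a) - c * (s x * x) = b}"
  have "inj_on (\<lambda>x. s (x + a)) ?S"
    by (rule inj_onI, rule sign_twisted_solutions_unique[OF sign mult c ratio, where a = a])
      simp_all
  moreover have "(\<lambda>x. s (x + a)) ` ?S \<subseteq> {1, -1}" using sign by auto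
  ultimately have "card ?S \<le> card {1, -1::'a}" by (rule card_inj_on_le) simp
  also have "\<dots> \<le> 2" by (simp add: card_insert_if)
  finally show ?thesis .
qed

lemma cdiff_uniformity_le:
  assumes "\<And>a b. cdiff_count F c a b \<le> k"
  shows "cdiff_uniformity F c \<le> k"
proof -
  let ?counts = "{cdiff_count F c a b | a b. c \<noteq> 1 \<or> a \<noteq> 0}"
  have "cdiff_count F c 1 0 \<in> ?counts" by auto
  then have "?counts \<noteq> {}" by blast
  moreover have "finite ?counts"
    by (rule finite_subset[of _ "range (case_prod (cdiff_count F c))"]) auto
  moreover have "\<forall>m \<in> ?counts. m \<le> k" using assms by auto
  ultimately show ?thesis
    unfolding cdiff_uniformity_def by (blast intro: Max.boundedI)
qed

theorem theorem6:
  fixes p n :: nat and c :: "'a::{field,finite}"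
  assumes "prime p" and "odd p" and "n > 0"
    and "card (UNIV :: 'a set) = p ^ n"
    and "c \<noteq> 1" and "c \<noteq> -1"
  shows "cdiff_uniformity (\<lambda>x::'a. x ^ ((p ^ n + 1) div 2)) c \<le> 4
     \<and> ((p ^ n) mod 4 = 1 \<and> qchi ((1 - c) / (1 + c)) = 1
          \<longrightarrow> cdiff_uniformity (\<lambda>x::'a. x ^ ((p ^ n + 1) div 2)) c \<le> 2)"
proof -
  have odd_card: "odd CARD('a)" using assms(2,4) by simp
  have F: "x ^ ((p ^ n + 1) div 2) = euler_sign x * x" for x :: 'a
    using power_half_card_Suc[OF odd_card] unfolding assms(4) .
  have "cdiff_uniformity (\<lambda>x. euler_sign x * x) c \<le> 4"
  proof (rule cdiff_uniformity_le)
    fix a b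
    show "cdiff_count (\<lambda>x. euler_sign x * x) c a b \<le> 4"
      unfolding cdiff_count_def
      using card_sign_twisted_solutions_le_4[where s = euler_sign, OF euler_sign_cases assms(5,6)] .
  qed
  moreover have "cdiff_uniformity (\<lambda>x. euler_sign x * x) c \<le> 2"
    if square: "qchi ((1 - c) / (1 + c)) = 1"
  proof (rule cdiff_uniformity_le)
    have "(1 - c) / (1 + c) \<noteq> 0 \<and> (\<exists>z. (1 - c) / (1 + c) = z ^ 2)"
      using square unfolding qchi_def by (rule contrapos_pp) simp
    then obtain z where z: "z \<noteq> 0" "(1 - c) / (1 + c) = z ^ 2" by force
    then have "(1 + c) / (1 - c) = (inverse z) ^ 2"
      by (metis inverse_divide power_inverse)
    then have ratio: "euler_sign ((1 - c) / (1 + c)) = 1" "euler_sign ((1 + c) / (1 - c)) = 1"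
      using z euler_sign_square[OF odd_card] by simp_all
    fix a b
    show "cdiff_count (\<lambda>x. euler_sign x * x) c a b \<le> 2"
      unfolding cdiff_count_def
      using card_sign_twisted_solutions_le_2[where s = euler_sign,
          OF euler_sign_cases euler_sign_mult[OF odd_card] assms(5,6) ratio] .
  qed
  ultimately show ?thesis unfolding F by auto
qed

end
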